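(* In the setting of ProxSARAH-AS applied to $\min_x F(x)=f(x)+r(x)$, $f=\frac1n\sum_{i=1}^nf_i$ (each $f_i$ differentiable, $\|\nabla f_i\|\le G_i$, $\nabla f_i$ $L_i$-Lipschitz, $r$ possibly non-convex non-smooth with existing proximal mapping, $F$ attaining its minimum $F(x^* )$, $\tilde L=\frac1n\sum_iL_i>0$), with a proper sampling of expected size $b$, a vector $v$ with $\mathbf P-pp^\top\preceq\mathrm{Diag}(p_1v_1,\dots,p_nv_n)$, $Q=\sum_{i=1}^n\frac{v_iL_i^2}{p_in^2}$, inner loop length $m$ and stepsize $\eta=\frac{1}{4\tilde L+2mQ/\tilde L}$: let $\epsilon>0$, $\Delta=F(\tilde x^1)-F(x^* )$, and take the number of epochs $\mathcal J=\frac{1}{m\epsilon^2}\big(24\tilde L+\frac{4mQ}{\tilde L}\big)\Delta$. If $x_R$ is drawn uniformly at random from $\{x_{t+1}^{(j)}:1\le t\le m,\ 1\le j\le\mathcal J\}$, then $E[\mathrm{dist}(0,\hat\partial F(x_R))]\le\epsilon$. Counting $n$ IFO calls for the full gradient of each epoch and $b$ IFO calls per inner iteration, the total number of IFO calls is $\frac{n+mb}{m\epsilon^2}\big(24\tilde L+\frac{4mQ}{\tilde L}\big)\Delta$.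
   Context: An IFO (incremental first-order oracle) call takes $x$ and $i\in[n]$ and returns $(f_i(x),\nabla f_i(x))$. $\mathrm{prox}_{\eta r}(y)=\arg\min_x\{\frac1{2\eta}\|x-y\|^2+r(x)\}$. A sampling is a random subset $S\subseteq[n]$ with $p_i=\mathrm{Prob}(i\in S)>0$, $\mathbf P_{ij}=\mathrm{Prob}(\{i,j\}\subseteq S)$, $E|S|=b$. ProxSARAH-AS: for $j=1,\dots,\mathcal J$: $x_0^{(j)}=\tilde x^{(j)}$, $\mathcal V_0^{(j)}=\frac1n\sum_i\nabla f_i(x_0^{(j)})$, $x_1^{(j)}=x_0^{(j)}$; for $t=1,\dots,m$: draw $S_t^{(j)}$ independently of the past, $\mathcal V_t^{(j)}=\sum_{i\in S_t^{(j)}}\frac1{np_i}(\nabla f_i(x_t^{(j)})-\nabla f_i(x_{t-1}^{(j)}))+\mathcal V_{t-1}^{(j)}$, $x_{t+1}^{(j)}\in\mathrm{prox}_{\eta r}(x_t^{(j)}-\eta\mathcal V_t^{(j)})$; then $\tilde x^{(j+1)}=x_{m+1}^{(j)}$. $\hat\partial F$ is the Fréchet subdifferential, $\hat\partial F(x)=\{v:\liminf_{\bar x\to x}\frac{F(\bar x)-F(x)-v^\top(\bar x-x)}{\|\bar x-x\|}\ge0\}$, and $\mathrm{dist}(0,A)=\inf_{v\in A}\|v\|$. *)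

theory Defs
  imports "HOL-Analysis.Analysis" "HOL-Probability.Probability"
begin

definition frechet_subdiff :: "('a::euclidean_space \<Rightarrow> real) \<Rightarrow> 'a \<Rightarrow> 'a set" where
  "frechet_subdiff F x =
     {v. Liminf (at x) (\<lambda>y. ereal ((F y - F x - inner v (y - x)) / norm (y - x))) \<ge> 0}"

(* dist(0, A) = inf_{v in A} |v|, valued in [0, +infinity] (infinite when A is empty) *)
definition dist0 :: "'a::real_normed_vector set \<Rightarrow> ennreal" where
  "dist0 A = (INF v\<in>A. ennreal (norm v))"

definition is_prox :: "real \<Rightarrow> ('a::real_normed_vector \<Rightarrow> real) \<Rightarrow> 'a \<Rightarrow> 'a \<Rightarrow> bool" where
  "is_prox eta r y x \<longleftrightarrow>
     (\<forall>z. 1 / (2 * eta) * (norm (x - y))\<^sup>2 + r x \<le> 1 / (2 * eta) * (norm (z - y))\<^sup>2 + r z)"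

definition full_grad :: "nat \<Rightarrow> (nat \<Rightarrow> 'a \<Rightarrow> 'a::real_vector) \<Rightarrow> 'a \<Rightarrow> 'a" where
  "full_grad n g x = (1 / real n) *\<^sub>R (\<Sum>i<n. g i x)"

(* Inner loop of one ProxSARAH-AS epoch started at x0 with samples s t (t = 1,2,...),
   proximal selection pr.  sarah_state ... t = (x_t, x_{t+1}, V_t). *)
fun sarah_state :: "nat \<Rightarrow> (nat \<Rightarrow> 'a \<Rightarrow> 'a::real_vector) \<Rightarrow> (nat \<Rightarrow> real) \<Rightarrow> real
      \<Rightarrow> ('a \<Rightarrow> 'a) \<Rightarrow> 'a \<Rightarrow> (nat \<Rightarrow> nat set) \<Rightarrow> nat \<Rightarrow> 'a \<times> 'a \<times> 'a" where
  "sarah_state n g p eta pr x0 s 0 = (x0, x0, full_grad n g x0)"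
| "sarah_state n g p eta pr x0 s (Suc t) =
     (case sarah_state n g p eta pr x0 s t of (xprev, xcur, V) \<Rightarrow>
        let V' = (\<Sum>i\<in>s (Suc t). (1 / (real n * p i)) *\<^sub>R (g i xcur - g i xprev)) + V
        in (xcur, pr (xcur - eta *\<^sub>R V'), V'))"

definition sarah_next :: "nat \<Rightarrow> (nat \<Rightarrow> 'a \<Rightarrow> 'a::real_vector) \<Rightarrow> (nat \<Rightarrow> real) \<Rightarrow> real
      \<Rightarrow> ('a \<Rightarrow> 'a) \<Rightarrow> 'a \<Rightarrow> (nat \<Rightarrow> nat set) \<Rightarrow> nat \<Rightarrow> 'a" where
  "sarah_next n g p eta pr x0 s t = fst (snd (sarah_state n g p eta pr x0 s t))"

(* epoch_start ... k = tilde x^{(k+1)}; omega (j, t) = S_t^{(j)} *)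
fun epoch_start :: "nat \<Rightarrow> (nat \<Rightarrow> 'a \<Rightarrow> 'a::real_vector) \<Rightarrow> (nat \<Rightarrow> real) \<Rightarrow> real
      \<Rightarrow> ('a \<Rightarrow> 'a) \<Rightarrow> nat \<Rightarrow> 'a \<Rightarrow> (nat \<times> nat \<Rightarrow> nat set) \<Rightarrow> nat \<Rightarrow> 'a" where
  "epoch_start n g p eta pr m x1 \<omega> 0 = x1"
| "epoch_start n g p eta pr m x1 \<omega> (Suc k) =
     sarah_next n g p eta pr (epoch_start n g p eta pr m x1 \<omega> k) (\<lambda>t. \<omega> (Suc k, t)) m"

definition proxsarah_iter :: "nat \<Rightarrow> (nat \<Rightarrow> 'a \<Rightarrow> 'a::real_vector) \<Rightarrow> (nat \<Rightarrow> real) \<Rightarrow> real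
      \<Rightarrow> ('a \<Rightarrow> 'a) \<Rightarrow> nat \<Rightarrow> 'a \<Rightarrow> (nat \<times> nat \<Rightarrow> nat set) \<Rightarrow> nat \<Rightarrow> nat \<Rightarrow> 'a" where
  "proxsarah_iter n g p eta pr m x1 \<omega> j t =
     sarah_next n g p eta pr (epoch_start n g p eta pr m x1 \<omega> (j - 1)) (\<lambda>t'. \<omega> (j, t')) t"

definition ifo_total :: "nat \<Rightarrow> nat \<Rightarrow> real \<Rightarrow> nat \<Rightarrow> real" where
  "ifo_total n m b J = real J * real n + real J * real m * b"

end

(*
  A proximal gradient step x' = prox (x - eta V) with an inexact gradient V is analysed
  deterministically: the descent lemma and the optimality of x' bound the squared norm of the
  residual G = grad f x' - (x' - (x - eta V)) / eta, which lies in the Frechet subdifferential of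
  F at x', by the decrease of F plus the squared gradient error |grad f x - V|^2, minus a
  multiple of |x' - x|^2.  The expected-separable-overapproximation inequality shows that one
  SARAH update increases the expected squared gradient error by at most Q |x' - x|^2, which the
  last term pays for.  Hence F (x_t) - F x* + 3 eta/2 (m + 1 - t) |grad f x_t - V_t|^2 decreases
  in expectation by E |G_t|^2 / (24 Lt + 4 m Q / Lt) per inner step; at both ends of an epoch it
  equals F - F x* at the epoch start, the full gradient being exact there.  Telescoping over all
  epochs bounds the mean of E |G|^2 over the J m iterates by epsilon^2, and
  E |G| <= epsilon follows from |G| <= |G|^2 / (2 epsilon) + epsilon / 2.
*)
theory Submission
  imports Defs
begin

section \<open>Proximal gradient steps\<close>

lemma quadratic_residual_bound:
  fixes L K \<eta> y d :: real
  assumes L: "L > 0" and K: "K \<ge> 0" and \<eta>: "\<eta> = 1 / (4 * L + 2 * K)"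
  shows "1 / (24 * L + 4 * K) * (L * d + y)\<^sup>2
    \<le> \<eta> / 2 * y\<^sup>2 - L / 2 * d\<^sup>2 + \<eta> * (d / \<eta> - y)\<^sup>2 - 3 / 2 * \<eta> * K * L * d\<^sup>2"
proof -
  define u where "u = 4 * L + 2 * K"
  define w where "w = 24 * L + 4 * K"
  have u: "u > 0" and w: "w > 0" using L K by (auto simp: u_def w_def)
  \<comment> \<open>Scaled by \<open>u w\<close>, the difference of the two sides is the quadratic form
      \<open>A y\<^sup>2 - 2 B y d + C d\<^sup>2\<close>, which is nonnegative since \<open>A > 0\<close> and \<open>A C \<ge> B\<^sup>2\<close>.\<close>
  define A where "A = 32 * L + 4 * K"
  define B where "B = u * (w + L)"
  define C where "C = w * (u\<^sup>2 - u * L / 2 - 3 / 2 * K * L) - u * L\<^sup>2"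
  have A: "A > 0" using L K by (simp add: A_def)
  have "A * C - B\<^sup>2 = 624 * L^4 + 224 * L^3 * K + 356 * L\<^sup>2 * K\<^sup>2 + 56 * L * K^3"
    unfolding A_def B_def C_def u_def w_def
    by (simp add: algebra_simps power2_eq_square power3_eq_cube power4_eq_xxxx)
  also have "\<dots> \<ge> 0" using L K by simp
  finally have discr: "A * C - B\<^sup>2 \<ge> 0" .
  have "A * (A * y\<^sup>2 - 2 * B * y * d + C * d\<^sup>2) = (A * y - B * d)\<^sup>2 + (A * C - B\<^sup>2) * d\<^sup>2"
    by (simp add: algebra_simps power2_eq_square)
  also have "\<dots> \<ge> 0" using discr by simp
  finally have form_nonneg: "A * y\<^sup>2 - 2 * B * y * d + C * d\<^sup>2 \<ge> 0"
    using A by (simp add: zero_le_mult_iff)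
  have "u * w * (1 / u / 2 * y\<^sup>2 - L / 2 * d\<^sup>2 + 1 / u * (d * u - y)\<^sup>2
      - 3 / 2 * (1 / u) * K * L * d\<^sup>2 - 1 / w * (L * d + y)\<^sup>2)
    = A * y\<^sup>2 - 2 * B * y * d + C * d\<^sup>2"
    using u w unfolding A_def B_def C_def
    by (simp add: field_simps power2_eq_square) (simp add: u_def w_def algebra_simps)
  with form_nonneg u w have nonneg: "0 \<le> 1 / u / 2 * y\<^sup>2 - L / 2 * d\<^sup>2 + 1 / u * (d * u - y)\<^sup>2
      - 3 / 2 * (1 / u) * K * L * d\<^sup>2 - 1 / w * (L * d + y)\<^sup>2"
    by (metis mult_pos_pos zero_le_mult_iff not_less)
  have scale_d: "d / (1 / u) = d * u" by simp
  show ?thesis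
    unfolding \<eta> u_def[symmetric] w_def[symmetric] scale_d using nonneg by linarith
qed

lemma lipschitz_gradient_descent:
  fixes f :: "'a::real_inner \<Rightarrow> real"
  assumes grad: "\<And>x. (f has_derivative (\<lambda>h. inner h (f' x))) (at x)"
    and lip: "\<And>x y. norm (f' x - f' y) \<le> L * norm (x - y)"
  shows "f y \<le> f x + inner (f' x) (y - x) + L / 2 * (norm (y - x))\<^sup>2"
proof -
  define d where "d = y - x"
  define \<phi> where "\<phi> s = f (x + s *\<^sub>R d) - s * inner (f' x) d - L / 2 * s\<^sup>2 * (norm d)\<^sup>2" for s
  have \<phi>_deriv: "(\<phi> has_real_derivative
      inner d (f' (x + s *\<^sub>R d)) - inner (f' x) d - L * s * (norm d)\<^sup>2) (at s)" for s
  proof -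
    have "((\<lambda>s. f (x + s *\<^sub>R d)) has_derivative (\<lambda>h. inner (h *\<^sub>R d) (f' (x + s *\<^sub>R d)))) (at s)"
      by (rule has_derivative_compose[OF _ grad]) (auto intro!: derivative_eq_intros)
    moreover have "(\<lambda>h. inner (h *\<^sub>R d) (f' (x + s *\<^sub>R d))) = (*) (inner d (f' (x + s *\<^sub>R d)))"
      by (auto simp: fun_eq_iff)
    ultimately have "((\<lambda>s. f (x + s *\<^sub>R d)) has_real_derivative inner d (f' (x + s *\<^sub>R d))) (at s)"
      by (simp add: has_field_derivative_def)
    then show ?thesis unfolding \<phi>_def[abs_def] by (auto intro!: derivative_eq_intros)
  qed
  have "\<phi> 1 \<le> \<phi> 0"
  proof (rule DERIV_nonpos_imp_nonincreasing[of 0 1 \<phi>])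
    fix s :: real assume s: "0 \<le> s" "s \<le> 1"
    have "inner d (f' (x + s *\<^sub>R d)) - inner (f' x) d = inner d (f' (x + s *\<^sub>R d) - f' x)"
      by (simp add: inner_diff_right inner_commute)
    also have "\<dots> \<le> norm d * norm (f' (x + s *\<^sub>R d) - f' x)" by (rule norm_cauchy_schwarz)
    also have "\<dots> \<le> norm d * (L * norm (s *\<^sub>R d))"
      using lip[of "x + s *\<^sub>R d" x] by (intro mult_left_mono) auto
    also have "\<dots> = L * s * (norm d)\<^sup>2" using s by (simp add: power2_eq_square)
    finally have "inner d (f' (x + s *\<^sub>R d)) - inner (f' x) d - L * s * (norm d)\<^sup>2 \<le> 0"
      by simp
    then show "\<exists>D. (\<phi> has_real_derivative D) (at s) \<and> D \<le> 0"
      using \<phi>_deriv by blast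
  qed simp
  then show ?thesis unfolding \<phi>_def d_def by (simp add: algebra_simps)
qed

lemma is_prox_minorant:
  fixes r :: "'a::real_inner \<Rightarrow> real"
  assumes prox: "is_prox \<eta> r z x" and \<eta>: "\<eta> > 0"
  shows "r x - inner ((1 / \<eta>) *\<^sub>R (x - z)) (y - x) - (norm (y - x))\<^sup>2 / (2 * \<eta>) \<le> r y"
proof -
  define h where "h = y - x"
  have shift: "h + (x - z) = y - z" by (simp add: h_def)
  have "1 / (2 * \<eta>) * (norm (x - z))\<^sup>2 + r x \<le> 1 / (2 * \<eta>) * (norm (y - z))\<^sup>2 + r y"
    using prox unfolding is_prox_def by blast
  then have "1 / (2 * \<eta>) * (norm (x - z))\<^sup>2 + r x \<le> 1 / (2 * \<eta>) * (norm (h + (x - z)))\<^sup>2 + r y"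
    by (simp only: shift)
  moreover have "(norm (h + (x - z)))\<^sup>2 = (norm h)\<^sup>2 + 2 * inner h (x - z) + (norm (x - z))\<^sup>2"
    unfolding power2_norm_eq_inner by (simp add: inner_add_left inner_add_right inner_commute)
  ultimately have "1 / (2 * \<eta>) * (norm (x - z))\<^sup>2 + r x \<le> 1 / (2 * \<eta>) * (norm h)\<^sup>2
      + 1 / (2 * \<eta>) * (2 * inner h (x - z)) + 1 / (2 * \<eta>) * (norm (x - z))\<^sup>2 + r y"
    by (simp add: distrib_left)
  moreover have "inner ((1 / \<eta>) *\<^sub>R (x - z)) h = 1 / (2 * \<eta>) * (2 * inner h (x - z))"
    by (simp add: inner_commute)
  moreover have "(norm h)\<^sup>2 / (2 * \<eta>) = 1 / (2 * \<eta>) * (norm h)\<^sup>2"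
    by simp
  ultimately show ?thesis unfolding h_def[symmetric] by linarith
qed

lemma is_prox_decrease:
  fixes r :: "'a::real_inner \<Rightarrow> real"
  assumes prox: "is_prox \<eta> r (x - \<eta> *\<^sub>R V) x'" and \<eta>: "\<eta> > 0"
  shows "r x' \<le> r x - (norm (x' - x))\<^sup>2 / (2 * \<eta>) - inner (x' - x) V"
proof -
  have expand: "(norm ((x' - x) + \<eta> *\<^sub>R V))\<^sup>2
      = (norm (x' - x))\<^sup>2 + 2 * \<eta> * inner (x' - x) V + (norm (\<eta> *\<^sub>R V))\<^sup>2"
    unfolding power2_norm_eq_inner by (simp add: inner_add_left inner_add_right inner_commute)
  have scale: "1 / (2 * \<eta>) * ((norm (x' - x))\<^sup>2 + 2 * \<eta> * inner (x' - x) V + (norm (\<eta> *\<^sub>R V))\<^sup>2)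
      = (norm (x' - x))\<^sup>2 / (2 * \<eta>) + inner (x' - x) V + 1 / (2 * \<eta>) * (norm (\<eta> *\<^sub>R V))\<^sup>2"
    using \<eta> by (simp add: field_simps)
  have "1 / (2 * \<eta>) * (norm (x' - (x - \<eta> *\<^sub>R V)))\<^sup>2 + r x'
      \<le> 1 / (2 * \<eta>) * (norm (x - (x - \<eta> *\<^sub>R V)))\<^sup>2 + r x"
    using prox unfolding is_prox_def by blast
  moreover have "x' - (x - \<eta> *\<^sub>R V) = (x' - x) + \<eta> *\<^sub>R V" "x - (x - \<eta> *\<^sub>R V) = \<eta> *\<^sub>R V"
    by simp_all
  ultimately have "1 / (2 * \<eta>) * (norm ((x' - x) + \<eta> *\<^sub>R V))\<^sup>2 + r x'
      \<le> 1 / (2 * \<eta>) * (norm (\<eta> *\<^sub>R V))\<^sup>2 + r x"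
    by simp
  then show ?thesis unfolding expand scale by linarith
qed

lemma is_prox_residual_in_frechet_subdiff:
  fixes f r :: "'a::euclidean_space \<Rightarrow> real"
  assumes \<eta>: "\<eta> > 0"
    and deriv: "(f has_derivative (\<lambda>h. inner h u)) (at x)"
    and prox: "is_prox \<eta> r z x"
  shows "u - (1 / \<eta>) *\<^sub>R (x - z) \<in> frechet_subdiff (\<lambda>y. f y + r y) x"
proof -
  define v where "v = u - (1 / \<eta>) *\<^sub>R (x - z)"
  define err where "err y = norm (f y - f x - inner (y - x) u) / norm (y - x)" for y
  define lower where "lower y = - err y - norm (y - x) / (2 * \<eta>)" for y
  have "(err \<longlongrightarrow> 0) (at x)"
    using deriv unfolding err_def has_derivative_iff_norm by simp
  then have "((\<lambda>y. ereal (lower y)) \<longlongrightarrow> ereal 0) (at x)"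
    unfolding lower_def lim_ereal using \<eta>
    by (auto intro!: tendsto_eq_intros)
  then have Liminf_lower: "Liminf (at x) (\<lambda>y. ereal (lower y)) = 0"
    by (simp add: lim_imp_Liminf zero_ereal_def)
  have lower_le: "\<forall>\<^sub>F y in at x.
      ereal (lower y) \<le> ereal ((f y + r y - (f x + r x) - inner v (y - x)) / norm (y - x))"
    unfolding eventually_at_filter
  proof (intro always_eventually allI impI)
    fix y assume "y \<noteq> x"
    define h where "h = y - x"
    have h: "norm h > 0" using \<open>y \<noteq> x\<close> by (simp add: h_def)
    have r_part: "r y - r x + inner ((1 / \<eta>) *\<^sub>R (x - z)) h \<ge> - (norm h)\<^sup>2 / (2 * \<eta>)"
      using is_prox_minorant[OF prox \<eta>, of y] by (simp add: h_def)
    have f_part: "f y - f x - inner u h \<ge> - err y * norm h"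
      using h by (simp add: err_def h_def inner_commute)
    have "lower y * norm h = - err y * norm h - (norm h)\<^sup>2 / (2 * \<eta>)"
      using h by (simp add: lower_def err_def h_def algebra_simps power2_eq_square)
    also have "\<dots> \<le> f y + r y - (f x + r x) - inner v h"
      using r_part f_part by (simp add: v_def inner_diff_left)
    finally have "lower y * norm h \<le> f y + r y - (f x + r x) - inner v h" .
    then have "lower y \<le> (f y + r y - (f x + r x) - inner v h) / norm h"
      by (simp only: pos_le_divide_eq[OF h])
    then show "ereal (lower y) \<le> ereal ((f y + r y - (f x + r x) - inner v (y - x)) / norm (y - x))"
      unfolding h_def ereal_less_eq(3) .
  qed
  have "Liminf (at x) (\<lambda>y. ereal (lower y))
      \<le> Liminf (at x) (\<lambda>y. ereal ((f y + r y - (f x + r x) - inner v (y - x)) / norm (y - x)))"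
    by (rule Liminf_mono[OF lower_le])
  then show ?thesis unfolding frechet_subdiff_def v_def Liminf_lower mem_Collect_eq .
qed

lemma prox_grad_step_decrease:
  fixes f r :: "'a::real_inner \<Rightarrow> real"
  assumes grad: "\<And>x. (f has_derivative (\<lambda>h. inner h (f' x))) (at x)"
    and lip: "\<And>x y. norm (f' x - f' y) \<le> L * norm (x - y)"
    and \<eta>: "\<eta> > 0" and prox: "is_prox \<eta> r (x - \<eta> *\<^sub>R V) x'"
  shows "\<eta> / 2 * (norm ((1 / \<eta>) *\<^sub>R (x' - x) - (f' x - V)))\<^sup>2 - \<eta> / 2 * (norm (f' x - V))\<^sup>2
      - L / 2 * (norm (x' - x))\<^sup>2
    \<le> (f x + r x) - (f x' + r x')"
proof -
  define d e where "d = x' - x" and "e = f' x - V"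
  have "f x' + r x' \<le> f x + inner (f' x) d + L / 2 * (norm d)\<^sup>2
      + (r x - (norm d)\<^sup>2 / (2 * \<eta>) - inner d V)"
    using lipschitz_gradient_descent[OF grad lip, of x' x] is_prox_decrease[OF prox \<eta>]
    unfolding d_def by linarith
  moreover have "(norm ((1 / \<eta>) *\<^sub>R d - e))\<^sup>2
      = (1 / \<eta>)\<^sup>2 * (norm d)\<^sup>2 - 2 * (1 / \<eta>) * inner e d + (norm e)\<^sup>2"
    unfolding power2_norm_eq_inner
    by (simp add: inner_diff_left inner_diff_right inner_commute algebra_simps power2_eq_square)
  then have "inner e d
      = (norm d)\<^sup>2 / (2 * \<eta>) + \<eta> / 2 * (norm e)\<^sup>2 - \<eta> / 2 * (norm ((1 / \<eta>) *\<^sub>R d - e))\<^sup>2"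
    using \<eta> by (simp add: field_simps power2_eq_square)
  moreover have "inner e d = inner (f' x) d - inner d V"
    unfolding e_def inner_diff_left by (simp add: inner_commute)
  ultimately show ?thesis unfolding d_def e_def by linarith
qed

lemma prox_grad_step_residual_bound:
  fixes f r :: "'a::real_inner \<Rightarrow> real"
  assumes grad: "\<And>x. (f has_derivative (\<lambda>h. inner h (f' x))) (at x)"
    and lip: "\<And>x y. norm (f' x - f' y) \<le> L * norm (x - y)"
    and L: "L > 0" and K: "K \<ge> 0" and \<eta>: "\<eta> = 1 / (4 * L + 2 * K)"
    and prox: "is_prox \<eta> r (x - \<eta> *\<^sub>R V) x'"
  shows "1 / (24 * L + 4 * K) * (norm (f' x' - (1 / \<eta>) *\<^sub>R (x' - (x - \<eta> *\<^sub>R V))))\<^sup>2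
    \<le> (f x + r x) - (f x' + r x') + 3 * \<eta> / 2 * (norm (f' x - V))\<^sup>2
      - 3 * \<eta> / 2 * K * L * (norm (x' - x))\<^sup>2"
proof -
  have \<eta>_pos: "\<eta> > 0" using L K \<eta> by simp
  define d e where "d = x' - x" and "e = f' x - V"
  define u where "u = (1 / \<eta>) *\<^sub>R d - e"
  \<comment> \<open>\<open>u\<close> is chosen so that the residual at \<open>x'\<close> equals \<open>(f' x' - f' x) - u\<close>.\<close>
  define dn yn en where "dn = norm d" and "yn = norm u" and "en = norm e"
  have descent: "\<eta> / 2 * yn\<^sup>2 - \<eta> / 2 * en\<^sup>2 - L / 2 * dn\<^sup>2 \<le> (f x + r x) - (f x' + r x')"
    unfolding yn_def u_def en_def dn_def d_def e_def
    by (rule prox_grad_step_decrease[OF grad lip \<eta>_pos prox])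
  have residual_eq: "f' x' - (1 / \<eta>) *\<^sub>R (x' - (x - \<eta> *\<^sub>R V)) = (f' x' - f' x) - u"
    using \<eta>_pos by (simp add: u_def d_def e_def algebra_simps)
  have "norm ((f' x' - f' x) - u) \<le> norm (f' x' - f' x) + norm u"
    by (rule norm_triangle_ineq4)
  also have "\<dots> \<le> L * dn + yn"
    using lip[of x' x] by (simp add: yn_def dn_def d_def)
  finally have residual: "(norm (f' x' - (1 / \<eta>) *\<^sub>R (x' - (x - \<eta> *\<^sub>R V))))\<^sup>2 \<le> (L * dn + yn)\<^sup>2"
    unfolding residual_eq by (intro power_mono) auto
  have "\<bar>norm ((1 / \<eta>) *\<^sub>R d) - norm u\<bar> \<le> norm e"
    using norm_triangle_ineq3[of "(1 / \<eta>) *\<^sub>R d" u] by (simp add: u_def)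
  then have "\<bar>dn / \<eta> - yn\<bar> \<le> en" using \<eta>_pos by (simp add: dn_def yn_def en_def)
  then have error: "(dn / \<eta> - yn)\<^sup>2 \<le> en\<^sup>2"
    by (metis abs_le_square_iff abs_of_nonneg en_def norm_ge_zero)
  have "1 / (24 * L + 4 * K) * (norm (f' x' - (1 / \<eta>) *\<^sub>R (x' - (x - \<eta> *\<^sub>R V))))\<^sup>2
      \<le> 1 / (24 * L + 4 * K) * (L * dn + yn)\<^sup>2"
    using residual L K by (intro mult_left_mono) auto
  also have "\<dots> \<le> \<eta> / 2 * yn\<^sup>2 - L / 2 * dn\<^sup>2 + \<eta> * (dn / \<eta> - yn)\<^sup>2 - 3 / 2 * \<eta> * K * L * dn\<^sup>2"
    by (rule quadratic_residual_bound[OF L K \<eta>])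
  also have "\<dots> \<le> \<eta> / 2 * yn\<^sup>2 - L / 2 * dn\<^sup>2 + \<eta> * en\<^sup>2 - 3 / 2 * \<eta> * K * L * dn\<^sup>2"
    using error \<eta>_pos by simp
  also have "\<dots> \<le> (f x + r x) - (f x' + r x') + 3 * \<eta> / 2 * en\<^sup>2 - 3 * \<eta> / 2 * K * L * dn\<^sup>2"
    using descent by simp
  finally show ?thesis by (simp add: en_def e_def dn_def d_def)
qed

section \<open>Samplings and expectations\<close>

lemma euclidean_quadratic_form_le:
  fixes M :: "'i \<Rightarrow> 'i \<Rightarrow> real" and D :: "'i \<Rightarrow> real" and w :: "'i \<Rightarrow> 'a::euclidean_space"
  assumes form: "\<And>h :: 'i \<Rightarrow> real. (\<Sum>i\<in>I. \<Sum>j\<in>I. M i j * h i * h j) \<le> (\<Sum>i\<in>I. D i * (h i)\<^sup>2)"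
  shows "(\<Sum>i\<in>I. \<Sum>j\<in>I. M i j * inner (w i) (w j)) \<le> (\<Sum>i\<in>I. D i * (norm (w i))\<^sup>2)"
proof -
  \<comment> \<open>Apply the scalar inequality to each coordinate \<open>h i = inner (w i) k\<close>, \<open>k \<in> Basis\<close>, and sum.\<close>
  have "(\<Sum>i\<in>I. \<Sum>j\<in>I. M i j * inner (w i) (w j))
      = (\<Sum>i\<in>I. \<Sum>j\<in>I. \<Sum>k\<in>Basis. M i j * inner (w i) k * inner (w j) k)"
    by (intro sum.cong refl) (subst euclidean_inner, simp add: sum_distrib_left mult.assoc)
  also have "\<dots> = (\<Sum>i\<in>I. \<Sum>k\<in>Basis. \<Sum>j\<in>I. M i j * inner (w i) k * inner (w j) k)"
    by (intro sum.cong refl sum.swap)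
  also have "\<dots> = (\<Sum>k\<in>Basis. \<Sum>i\<in>I. \<Sum>j\<in>I. M i j * inner (w i) k * inner (w j) k)"
    by (rule sum.swap)
  also have "\<dots> \<le> (\<Sum>k\<in>Basis. \<Sum>i\<in>I. D i * (inner (w i) k)\<^sup>2)"
    by (intro sum_mono form)
  also have "\<dots> = (\<Sum>i\<in>I. \<Sum>k\<in>Basis. D i * (inner (w i) k)\<^sup>2)"
    by (rule sum.swap)
  also have "\<dots> = (\<Sum>i\<in>I. D i * (norm (w i))\<^sup>2)"
  proof (intro sum.cong refl)
    fix i
    have "(norm (w i))\<^sup>2 = (\<Sum>k\<in>Basis. (inner (w i) k)\<^sup>2)"
      by (subst power2_norm_eq_inner, subst euclidean_inner, simp add: power2_eq_square)
    then show "(\<Sum>k\<in>Basis. D i * (inner (w i) k)\<^sup>2) = D i * (norm (w i))\<^sup>2"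
      by (simp add: sum_distrib_left)
  qed
  finally show ?thesis .
qed

locale eso_sampling =
  fixes n :: nat and S :: "nat set pmf" and p :: "nat \<Rightarrow> real" and P :: "nat \<Rightarrow> nat \<Rightarrow> real"
    and v :: "nat \<Rightarrow> real"
  assumes p_def: "p = (\<lambda>i. measure_pmf.prob S {A. i \<in> A})"
    and P_def: "P = (\<lambda>i j. measure_pmf.prob S {A. i \<in> A \<and> j \<in> A})"
    and sampling_subset: "set_pmf S \<subseteq> Pow {..<n}"
    and proper: "\<And>i. i < n \<Longrightarrow> p i > 0"
    and ESO: "\<And>h :: nat \<Rightarrow> real.
       (\<Sum>i<n. \<Sum>j<n. (P i j - p i * p j) * h i * h j) \<le> (\<Sum>i<n. p i * v i * (h i)\<^sup>2)"
begin

lemma finite_set_pmf_sampling: "finite (set_pmf S)"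
  by (rule finite_subset[OF sampling_subset]) simp

lemma integrable_sampling [simp]: "integrable (measure_pmf S) (h :: nat set \<Rightarrow> real)"
  by (rule integrable_measure_pmf_finite[OF finite_set_pmf_sampling])

lemma P_diag: "P i i = p i"
  by (simp add: P_def p_def)

lemma v_nonneg:
  assumes i: "i < n"
  shows "v i \<ge> 0"
proof -
  define h :: "nat \<Rightarrow> real" where "h j = (if j = i then 1 else 0)" for j
  have "(\<Sum>j<n. \<Sum>k<n. (P j k - p j * p k) * h j * h k)
      = (\<Sum>j<n. \<Sum>k<n. if j = i then (if k = i then P i i - p i * p i else 0) else 0)"
    by (intro sum.cong) (auto simp: h_def)
  also have "\<dots> = (\<Sum>j<n. if j = i then P i i - p i * p i else 0)"
    by (intro sum.cong refl) (use i in auto)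
  also have "\<dots> = P i i - p i * p i" using i by simp
  finally have "P i i - p i * p i \<le> (\<Sum>j<n. p j * v j * (h j)\<^sup>2)"
    using ESO[of h] by simp
  also have "(\<Sum>j<n. p j * v j * (h j)\<^sup>2) = (\<Sum>j<n. if j = i then p i * v i else 0)"
    by (intro sum.cong refl) (auto simp: h_def)
  also have "\<dots> = p i * v i" using i by simp
  finally have "p i * (1 - p i) \<le> p i * v i"
    by (simp add: P_diag algebra_simps)
  then have "1 - p i \<le> v i" using proper[OF i] by simp
  moreover have "p i \<le> 1" by (simp add: p_def)
  ultimately show ?thesis by simp
qed

lemma expectation_indicator_member: "measure_pmf.expectation S (\<lambda>A. indicator A i) = p i"
proof -
  have "(\<lambda>A. indicator A i :: real) = indicator {A. i \<in> A}" by (auto simp: fun_eq_iff indicator_def)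
  then show ?thesis by (simp add: p_def)
qed

lemma expectation_indicator_pair:
  "measure_pmf.expectation S (\<lambda>A. indicator A i * indicator A j) = P i j"
proof -
  have "(\<lambda>A. indicator A i * indicator A j :: real) = indicator {A. i \<in> A \<and> j \<in> A}"
    by (auto simp: fun_eq_iff indicator_def)
  then show ?thesis by (simp add: P_def)
qed

lemma expectation_norm_sampled_sum:
  fixes c :: "'a::euclidean_space" and w :: "nat \<Rightarrow> 'a"
  shows "measure_pmf.expectation S (\<lambda>A. (norm (c - (\<Sum>i\<in>A. w i)))\<^sup>2)
    \<le> (norm (c - (\<Sum>i<n. p i *\<^sub>R w i)))\<^sup>2 + (\<Sum>i<n. p i * v i * (norm (w i))\<^sup>2)"
proof -
  define ind :: "nat set \<Rightarrow> nat \<Rightarrow> real" where "ind A i = indicator A i" for A i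
  have expand: "(norm (c - (\<Sum>i\<in>A. w i)))\<^sup>2 = (norm c)\<^sup>2 - 2 * (\<Sum>i<n. ind A i * inner c (w i))
      + (\<Sum>i<n. \<Sum>j<n. ind A i * ind A j * inner (w i) (w j))"
    if "A \<in> set_pmf S" for A
  proof -
    have "A \<subseteq> {..<n}" using that sampling_subset by auto
    then have "(\<Sum>i\<in>A. w i) = (\<Sum>i<n. ind A i *\<^sub>R w i)"
      by (simp add: ind_def indicator_scaleR_eq_if sum.If_cases Int_absorb1)
    then show ?thesis
      by (simp add: power2_norm_eq_inner inner_diff_left inner_diff_right inner_sum_left
          inner_sum_right sum_distrib_left sum_negf mult.assoc mult.left_commute inner_commute)
  qed
  have "measure_pmf.expectation S (\<lambda>A. (norm (c - (\<Sum>i\<in>A. w i)))\<^sup>2)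
      = measure_pmf.expectation S (\<lambda>A. (norm c)\<^sup>2 - 2 * (\<Sum>i<n. ind A i * inner c (w i))
          + (\<Sum>i<n. \<Sum>j<n. ind A i * ind A j * inner (w i) (w j)))"
    using expand by (intro integral_cong_AE) (auto simp: AE_measure_pmf_iff)
  also have "\<dots> = (norm c)\<^sup>2 - 2 * (\<Sum>i<n. p i * inner c (w i))
      + (\<Sum>i<n. \<Sum>j<n. P i j * inner (w i) (w j))"
    using expectation_indicator_member expectation_indicator_pair unfolding ind_def[symmetric]
    by (simp add: Bochner_Integration.integral_sum Bochner_Integration.integral_add
        Bochner_Integration.integral_diff)
  also have "\<dots> = (norm (c - (\<Sum>i<n. p i *\<^sub>R w i)))\<^sup>2
      + (\<Sum>i<n. \<Sum>j<n. (P i j - p i * p j) * inner (w i) (w j))"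
    by (simp add: power2_norm_eq_inner inner_diff_left inner_diff_right inner_sum_left
        inner_sum_right sum_distrib_left left_diff_distrib sum_subtractf sum_negf mult.assoc
        mult.left_commute inner_commute)
  also have "\<dots> \<le> (norm (c - (\<Sum>i<n. p i *\<^sub>R w i)))\<^sup>2 + (\<Sum>i<n. p i * v i * (norm (w i))\<^sup>2)"
    using euclidean_quadratic_form_le[OF ESO, of w] by simp
  finally show ?thesis .
qed

end

lemma nn_integral_Pi_pmf_resample:
  fixes h :: "('k \<Rightarrow> 'b) \<Rightarrow> ennreal"
  assumes D: "finite D" and k: "k \<in> D"
  shows "(\<integral>\<^sup>+f. h f \<partial>measure_pmf (Pi_pmf D d q))
    = (\<integral>\<^sup>+f. (\<integral>\<^sup>+y. h (f(k := y)) \<partial>measure_pmf (q k)) \<partial>measure_pmf (Pi_pmf D d q))"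
proof -
  define D' where "D' = D - {k}"
  have split: "Pi_pmf D d q = map_pmf (\<lambda>(y, f). f(k := y)) (pair_pmf (q k) (Pi_pmf D' d q))"
    using Pi_pmf_insert[of D' k d q] D k by (simp add: D'_def insert_absorb)
  have swap: "(\<integral>\<^sup>+y. \<integral>\<^sup>+f. G y f \<partial>measure_pmf (Pi_pmf D' d q) \<partial>measure_pmf (q k))
      = (\<integral>\<^sup>+f. \<integral>\<^sup>+y. G y f \<partial>measure_pmf (q k) \<partial>measure_pmf (Pi_pmf D' d q))"
    for G :: "'b \<Rightarrow> ('k \<Rightarrow> 'b) \<Rightarrow> ennreal"
  proof -
    have "(\<integral>\<^sup>+y. \<integral>\<^sup>+f. G y f \<partial>measure_pmf (Pi_pmf D' d q) \<partial>measure_pmf (q k))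
        = (\<integral>\<^sup>+x. case_prod G x
            \<partial>measure_pmf (map_pmf (\<lambda>(x, y). (y, x)) (pair_pmf (Pi_pmf D' d q) (q k))))"
      by (subst pair_commute_pmf[symmetric]) (simp add: nn_integral_pair_pmf')
    then show ?thesis by (simp add: nn_integral_pair_pmf' case_prod_beta)
  qed
  have "(\<integral>\<^sup>+f. h f \<partial>measure_pmf (Pi_pmf D d q))
      = (\<integral>\<^sup>+y. \<integral>\<^sup>+f. h (f(k := y)) \<partial>measure_pmf (Pi_pmf D' d q) \<partial>measure_pmf (q k))"
    unfolding split by (simp add: nn_integral_pair_pmf' case_prod_beta)
  also have "\<dots> = (\<integral>\<^sup>+f. \<integral>\<^sup>+y. h (f(k := y)) \<partial>measure_pmf (q k) \<partial>measure_pmf (Pi_pmf D' d q))"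
    by (rule swap)
  also have "\<dots> = (\<integral>\<^sup>+y. \<integral>\<^sup>+f. \<integral>\<^sup>+z. h ((f(k := y))(k := z))
      \<partial>measure_pmf (q k) \<partial>measure_pmf (Pi_pmf D' d q) \<partial>measure_pmf (q k))"
    by (simp add: measure_pmf.emeasure_space_1)
  also have "\<dots> = (\<integral>\<^sup>+f. (\<integral>\<^sup>+y. h (f(k := y)) \<partial>measure_pmf (q k)) \<partial>measure_pmf (Pi_pmf D d q))"
    unfolding split by (simp add: nn_integral_pair_pmf' case_prod_beta)
  finally show ?thesis .
qed

lemma nn_integral_pair_pmf_of_set:
  assumes "finite D" "D \<noteq> {}"
  shows "(\<integral>\<^sup>+x. h x \<partial>measure_pmf (pair_pmf M (pmf_of_set D)))
    = (\<Sum>d\<in>D. \<integral>\<^sup>+\<omega>. h (\<omega>, d) \<partial>M) / card D"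
proof -
  have "(\<integral>\<^sup>+x. h x \<partial>measure_pmf (pair_pmf M (pmf_of_set D)))
      = (\<integral>\<^sup>+d. \<integral>\<^sup>+\<omega>. h (\<omega>, d) \<partial>M \<partial>measure_pmf (pmf_of_set D))"
    by (subst pair_commute_pmf) (simp add: nn_integral_pair_pmf' case_prod_beta)
  then show ?thesis using assms by (simp add: nn_integral_pmf_of_set)
qed

lemma nn_integral_le_of_nn_integral_square_le:
  fixes X :: "'a \<Rightarrow> real" and M :: "'a pmf"
  assumes \<epsilon>: "\<epsilon> > 0"
    and square: "(\<integral>\<^sup>+x. ennreal ((X x)\<^sup>2) \<partial>M) \<le> ennreal (\<epsilon>\<^sup>2)"
  shows "(\<integral>\<^sup>+x. ennreal (X x) \<partial>M) \<le> ennreal \<epsilon>"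
proof -
  define c where "c = 1 / (2 * \<epsilon>)"
  have c: "c > 0" using \<epsilon> by (simp add: c_def)
  have "X x \<le> c * (X x)\<^sup>2 + \<epsilon> / 2" for x
  proof -
    have "X x * (2 * \<epsilon>) \<le> (X x)\<^sup>2 + \<epsilon>\<^sup>2"
      using sum_squares_bound[of \<epsilon> "X x"] by (simp add: mult_ac)
    then have "X x \<le> ((X x)\<^sup>2 + \<epsilon>\<^sup>2) / (2 * \<epsilon>)"
      using \<epsilon> by (simp add: pos_le_divide_eq)
    also have "\<dots> = c * (X x)\<^sup>2 + \<epsilon> / 2"
      using \<epsilon> by (simp add: c_def field_simps power2_eq_square)
    finally show ?thesis .
  qed
  then have "ennreal (X x) \<le> ennreal (c * (X x)\<^sup>2 + \<epsilon> / 2)" for x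
    by (rule ennreal_leI)
  also have "ennreal (c * (X x)\<^sup>2 + \<epsilon> / 2) = ennreal c * ennreal ((X x)\<^sup>2) + ennreal (\<epsilon> / 2)" for x
    using \<epsilon> c by (simp add: ennreal_plus ennreal_mult)
  finally have "(\<integral>\<^sup>+x. ennreal (X x) \<partial>M)
      \<le> (\<integral>\<^sup>+x. ennreal c * ennreal ((X x)\<^sup>2) + ennreal (\<epsilon> / 2) \<partial>M)"
    by (intro nn_integral_mono)
  also have "\<dots> = ennreal c * (\<integral>\<^sup>+x. ennreal ((X x)\<^sup>2) \<partial>M) + ennreal (\<epsilon> / 2)"
    by (simp add: nn_integral_add nn_integral_cmult measure_pmf.emeasure_space_1)
  also have "\<dots> \<le> ennreal c * ennreal (\<epsilon>\<^sup>2) + ennreal (\<epsilon> / 2)"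
    using square by (intro add_right_mono mult_left_mono) auto
  also have "\<dots> = ennreal (c * \<epsilon>\<^sup>2 + \<epsilon> / 2)"
    using \<epsilon> c by (simp add: ennreal_plus ennreal_mult)
  also have "c * \<epsilon>\<^sup>2 + \<epsilon> / 2 = \<epsilon>"
    using \<epsilon> by (simp add: c_def field_simps power2_eq_square)
  finally show ?thesis .
qed

section \<open>The ProxSARAH-AS iteration\<close>

lemma telescope_le:
  fixes a b :: "nat \<Rightarrow> 'b::ordered_comm_monoid_add"
  assumes step: "\<And>k. k \<in> {1..N} \<Longrightarrow> a (Suc k) + b k \<le> a k"
  shows "a (Suc N) + (\<Sum>k=1..N. b k) \<le> a 1"
  using step
proof (induction N)
  case (Suc N)
  have "a (Suc (Suc N)) + (\<Sum>k=1..Suc N. b k) = (a (Suc (Suc N)) + b (Suc N)) + (\<Sum>k=1..N. b k)"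
    by (simp add: add_ac)
  also have "\<dots> \<le> a (Suc N) + (\<Sum>k=1..N. b k)"
    using Suc.prems[of "Suc N"] by (intro add_right_mono) simp
  also have "\<dots> \<le> a 1"
    by (rule Suc.IH, rule Suc.prems) simp
  finally show ?case .
qed simp

lemma sarah_state_Suc_fst:
  "fst (sarah_state n g p \<eta> pr x0 s (Suc t)) = fst (snd (sarah_state n g p \<eta> pr x0 s t))"
  by (simp add: split_beta Let_def)

lemma sarah_state_Suc_estimator:
  "snd (snd (sarah_state n g p \<eta> pr x0 s (Suc t))) =
     (\<Sum>i\<in>s (Suc t). (1 / (real n * p i)) *\<^sub>R
        (g i (fst (snd (sarah_state n g p \<eta> pr x0 s t)))
         - g i (fst (sarah_state n g p \<eta> pr x0 s t))))
     + snd (snd (sarah_state n g p \<eta> pr x0 s t))"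
  by (simp add: split_beta Let_def)

lemma sarah_state_next:
  "t \<ge> 1 \<Longrightarrow> fst (snd (sarah_state n g p \<eta> pr x0 s t)) =
     pr (fst (sarah_state n g p \<eta> pr x0 s t) - \<eta> *\<^sub>R snd (snd (sarah_state n g p \<eta> pr x0 s t)))"
  by (cases t) (simp_all add: split_beta Let_def)

lemma sarah_state_1:
  "fst (sarah_state n g p \<eta> pr x0 s 1) = x0"
  "snd (snd (sarah_state n g p \<eta> pr x0 s 1)) = full_grad n g x0"
  by (simp_all add: split_beta Let_def)

lemma sarah_state_cong:
  "(\<And>t'. t' \<in> {1..t} \<Longrightarrow> s t' = s' t') \<Longrightarrow>
     sarah_state n g p \<eta> pr x0 s t = sarah_state n g p \<eta> pr x0 s' t"
  by (induction t) (simp_all add: split_beta Let_def)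

lemma epoch_start_cong:
  "(\<And>j t. j \<in> {1..k} \<Longrightarrow> t \<in> {1..m} \<Longrightarrow> \<omega> (j, t) = \<omega>' (j, t)) \<Longrightarrow>
     epoch_start n g p \<eta> pr m x1 \<omega> k = epoch_start n g p \<eta> pr m x1 \<omega>' k"
proof (induction k)
  case (Suc k)
  then have "epoch_start n g p \<eta> pr m x1 \<omega> k = epoch_start n g p \<eta> pr m x1 \<omega>' k"
    by simp
  moreover have "sarah_state n g p \<eta> pr x0 (\<lambda>t. \<omega> (Suc k, t)) m
      = sarah_state n g p \<eta> pr x0 (\<lambda>t. \<omega>' (Suc k, t)) m" for x0
    using Suc.prems by (intro sarah_state_cong) simp
  ultimately show ?case by (simp add: sarah_next_def)
qed simp

locale proxsarah_as = eso_sampling n S p P v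
  for n :: nat and S p P v +
  fixes m :: nat
    and f :: "nat \<Rightarrow> 'a::euclidean_space \<Rightarrow> real" and g :: "nat \<Rightarrow> 'a \<Rightarrow> 'a"
    and L :: "nat \<Rightarrow> real" and r :: "'a \<Rightarrow> real" and pr :: "'a \<Rightarrow> 'a"
    and xstar x1 :: 'a and F :: "'a \<Rightarrow> real" and Lt Q \<eta> :: real
  assumes F_def: "F = (\<lambda>x. (1 / real n) * (\<Sum>i<n. f i x) + r x)"
    and Lt_def: "Lt = (1 / real n) * (\<Sum>i<n. L i)"
    and Q_def: "Q = (\<Sum>i<n. v i * (L i)\<^sup>2 / (p i * (real n)\<^sup>2))"
    and eta_def: "\<eta> = 1 / (4 * Lt + 2 * real m * Q / Lt)"
    and n_pos: "n \<ge> 1"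
    and grad: "\<And>i x. i < n \<Longrightarrow> GDERIV (f i) x :> g i x"
    and grad_lip: "\<And>i x y. i < n \<Longrightarrow> norm (g i x - g i y) \<le> L i * norm (x - y)"
    and Lt_pos: "Lt > 0"
    and minimum: "\<And>x. F xstar \<le> F x"
    and prox_sel: "\<And>y. is_prox \<eta> r y (pr y)"
begin

definition K :: real where "K = real m * Q / Lt"

lemma Q_nonneg: "Q \<ge> 0"
  unfolding Q_def using v_nonneg proper
  by (intro sum_nonneg divide_nonneg_pos mult_nonneg_nonneg) auto

lemma K_nonneg: "K \<ge> 0"
  unfolding K_def using Q_nonneg Lt_pos by simp

lemma eta_eq: "\<eta> = 1 / (4 * Lt + 2 * K)"
  unfolding eta_def K_def by simp

lemma eta_pos: "\<eta> > 0"
  unfolding eta_eq using K_nonneg Lt_pos by simp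

lemma full_grad_has_derivative:
  "((\<lambda>x. (1 / real n) * (\<Sum>i<n. f i x)) has_derivative (\<lambda>h. inner h (full_grad n g x))) (at x)"
proof -
  have "((\<lambda>x. \<Sum>i<n. f i x) has_derivative (\<lambda>h. \<Sum>i<n. inner h (g i x))) (at x)"
    by (rule has_derivative_sum) (use grad in \<open>auto simp: gderiv_def\<close>)
  then have "((\<lambda>x. (1 / real n) * (\<Sum>i<n. f i x)) has_derivative
      (\<lambda>h. (1 / real n) * (\<Sum>i<n. inner h (g i x)))) (at x)"
    by (rule has_derivative_mult_right)
  moreover have "(\<lambda>h. (1 / real n) * (\<Sum>i<n. inner h (g i x))) = (\<lambda>h. inner h (full_grad n g x))"
    by (auto simp: fun_eq_iff full_grad_def inner_sum_right)
  ultimately show ?thesis by simp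
qed

lemma full_grad_lipschitz: "norm (full_grad n g x - full_grad n g y) \<le> Lt * norm (x - y)"
proof -
  have "norm (full_grad n g x - full_grad n g y) = (1 / real n) * norm (\<Sum>i<n. g i x - g i y)"
    by (simp add: full_grad_def sum_subtractf scaleR_diff_right[symmetric])
  also have "\<dots> \<le> (1 / real n) * (\<Sum>i<n. L i * norm (x - y))"
    using grad_lip by (intro mult_left_mono order_trans[OF norm_sum sum_mono]) auto
  also have "\<dots> = Lt * norm (x - y)"
    by (simp add: Lt_def sum_distrib_right)
  finally show ?thesis .
qed

lemma full_grad_variance:
  "measure_pmf.expectation S (\<lambda>A. (norm (e + (full_grad n g x' - full_grad n g x)
      - (\<Sum>i\<in>A. (1 / (real n * p i)) *\<^sub>R (g i x' - g i x))))\<^sup>2)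
    \<le> (norm e)\<^sup>2 + Q * (norm (x' - x))\<^sup>2"
proof -
  define w where "w i = (1 / (real n * p i)) *\<^sub>R (g i x' - g i x)" for i
  have "(\<Sum>i<n. p i *\<^sub>R w i) = (\<Sum>i<n. (1 / real n) *\<^sub>R (g i x' - g i x))"
    using proper by (intro sum.cong refl) (fastforce simp: w_def)
  then have "(\<Sum>i<n. p i *\<^sub>R w i) = full_grad n g x' - full_grad n g x"
    by (simp add: full_grad_def sum_subtractf scaleR_diff_right scaleR_sum_right)
  then have "measure_pmf.expectation S (\<lambda>A. (norm (e + (full_grad n g x' - full_grad n g x)
      - (\<Sum>i\<in>A. w i)))\<^sup>2) \<le> (norm e)\<^sup>2 + (\<Sum>i<n. p i * v i * (norm (w i))\<^sup>2)"
    using expectation_norm_sampled_sum[of "e + (full_grad n g x' - full_grad n g x)" w] by simp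
  also have "(\<Sum>i<n. p i * v i * (norm (w i))\<^sup>2)
      \<le> (\<Sum>i<n. v i * (L i)\<^sup>2 / (p i * (real n)\<^sup>2) * (norm (x' - x))\<^sup>2)"
  proof (intro sum_mono)
    fix i assume i: "i \<in> {..<n}"
    then have pi: "p i > 0" using proper by simp
    have "norm (w i) = 1 / (real n * p i) * norm (g i x' - g i x)"
      using pi n_pos by (simp add: w_def)
    then have "p i * v i * (norm (w i))\<^sup>2 = v i * (norm (g i x' - g i x))\<^sup>2 / (p i * (real n)\<^sup>2)"
      using pi n_pos by (simp add: power2_eq_square field_simps)
    also have "\<dots> \<le> v i * (L i * norm (x' - x))\<^sup>2 / (p i * (real n)\<^sup>2)"
      using pi i v_nonneg[of i] grad_lip[of i x' x]
      by (intro divide_right_mono mult_left_mono power_mono) auto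
    finally show "p i * v i * (norm (w i))\<^sup>2
        \<le> v i * (L i)\<^sup>2 / (p i * (real n)\<^sup>2) * (norm (x' - x))\<^sup>2"
      by (simp add: power_mult_distrib)
  qed
  also have "\<dots> = Q * (norm (x' - x))\<^sup>2"
    by (simp add: Q_def sum_distrib_right)
  finally show ?thesis by (simp add: w_def)
qed

definition epoch :: "(nat \<times> nat \<Rightarrow> nat set) \<Rightarrow> nat \<Rightarrow> 'a" where
  "epoch \<omega> k = epoch_start n g p \<eta> pr m x1 \<omega> k"

definition state :: "(nat \<times> nat \<Rightarrow> nat set) \<Rightarrow> nat \<Rightarrow> nat \<Rightarrow> 'a \<times> 'a \<times> 'a" where
  "state \<omega> j t = sarah_state n g p \<eta> pr (epoch \<omega> (j - 1)) (\<lambda>t'. \<omega> (j, t')) t"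

definition x_cur :: "(nat \<times> nat \<Rightarrow> nat set) \<Rightarrow> nat \<Rightarrow> nat \<Rightarrow> 'a" where
  "x_cur \<omega> j t = fst (state \<omega> j t)"

definition x_next :: "(nat \<times> nat \<Rightarrow> nat set) \<Rightarrow> nat \<Rightarrow> nat \<Rightarrow> 'a" where
  "x_next \<omega> j t = fst (snd (state \<omega> j t))"

definition estimator :: "(nat \<times> nat \<Rightarrow> nat set) \<Rightarrow> nat \<Rightarrow> nat \<Rightarrow> 'a" where
  "estimator \<omega> j t = snd (snd (state \<omega> j t))"

definition grad_error :: "(nat \<times> nat \<Rightarrow> nat set) \<Rightarrow> nat \<Rightarrow> nat \<Rightarrow> 'a" where
  "grad_error \<omega> j t = full_grad n g (x_cur \<omega> j t) - estimator \<omega> j t"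

definition residual :: "(nat \<times> nat \<Rightarrow> nat set) \<Rightarrow> nat \<Rightarrow> nat \<Rightarrow> real" where
  "residual \<omega> j t = norm (full_grad n g (x_next \<omega> j t)
     - (1 / \<eta>) *\<^sub>R (x_next \<omega> j t - (x_cur \<omega> j t - \<eta> *\<^sub>R estimator \<omega> j t)))"

definition lyapunov :: "(nat \<times> nat \<Rightarrow> nat set) \<Rightarrow> nat \<Rightarrow> nat \<Rightarrow> real" where
  "lyapunov \<omega> j t = F (x_cur \<omega> j t) - F xstar
     + 3 * \<eta> / 2 * real (m + 1 - t) * (norm (grad_error \<omega> j t))\<^sup>2"

lemma x_cur_Suc: "x_cur \<omega> j (Suc t) = x_next \<omega> j t"
  unfolding x_cur_def x_next_def state_def by (rule sarah_state_Suc_fst)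

lemma x_next_is_prox:
  "t \<ge> 1 \<Longrightarrow> is_prox \<eta> r (x_cur \<omega> j t - \<eta> *\<^sub>R estimator \<omega> j t) (x_next \<omega> j t)"
  unfolding x_next_def x_cur_def estimator_def state_def sarah_state_next by (rule prox_sel)

lemma proxsarah_iter_eq: "proxsarah_iter n g p \<eta> pr m x1 \<omega> j t = x_next \<omega> j t"
  unfolding proxsarah_iter_def sarah_next_def x_next_def state_def epoch_def ..

lemma lyapunov_first: "lyapunov \<omega> j 1 = F (epoch \<omega> (j - 1)) - F xstar"
  using sarah_state_1[of n g p \<eta> pr "epoch \<omega> (j - 1)" "\<lambda>t'. \<omega> (j, t')"]
  by (simp add: lyapunov_def grad_error_def x_cur_def estimator_def state_def)

lemma lyapunov_last:
  assumes "j \<ge> 1"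
  shows "lyapunov \<omega> j (Suc m) = F (epoch \<omega> j) - F xstar"
proof -
  from assms obtain k where j: "j = Suc k" by (cases j) auto
  have "epoch \<omega> j = x_cur \<omega> j (Suc m)"
    unfolding j epoch_def x_cur_def state_def sarah_state_Suc_fst by (simp add: sarah_next_def)
  then show ?thesis by (simp add: lyapunov_def)
qed

lemma state_fun_upd:
  assumes "j \<ge> 1"
  shows "state (fun_upd \<omega> (j, Suc t) y) j t = state \<omega> j t"
proof -
  have "epoch (fun_upd \<omega> (j, Suc t) y) (j - 1) = epoch \<omega> (j - 1)"
    unfolding epoch_def by (rule epoch_start_cong) auto
  then show ?thesis
    unfolding state_def by (auto intro: sarah_state_cong)
qed

lemma grad_error_fun_upd:
  assumes "j \<ge> 1"
  shows "grad_error (fun_upd \<omega> (j, Suc t) y) j (Suc t) =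
    grad_error \<omega> j t + (full_grad n g (x_next \<omega> j t) - full_grad n g (x_cur \<omega> j t))
      - (\<Sum>i\<in>y. (1 / (real n * p i)) *\<^sub>R (g i (x_next \<omega> j t) - g i (x_cur \<omega> j t)))"
proof -
  have "state (fun_upd \<omega> (j, Suc t) y) j (Suc t) = sarah_state n g p \<eta> pr
      (epoch (fun_upd \<omega> (j, Suc t) y) (j - 1)) (\<lambda>t'. (fun_upd \<omega> (j, Suc t) y) (j, t')) (Suc t)"
    unfolding state_def ..
  then have "x_cur (fun_upd \<omega> (j, Suc t) y) j (Suc t) = x_next \<omega> j t"
    and "estimator (fun_upd \<omega> (j, Suc t) y) j (Suc t) =
      (\<Sum>i\<in>y. (1 / (real n * p i)) *\<^sub>R (g i (x_next \<omega> j t) - g i (x_cur \<omega> j t))) + estimator \<omega> j t"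
    using state_fun_upd[OF assms, of \<omega> t y]
    by (simp_all only: x_cur_def x_next_def estimator_def state_def sarah_state_Suc_fst
        sarah_state_Suc_estimator fun_upd_same)
  then show ?thesis by (simp add: grad_error_def algebra_simps)
qed

lemma residual_step_bound:
  assumes "t \<ge> 1"
  shows "1 / (24 * Lt + 4 * K) * (residual \<omega> j t)\<^sup>2
    \<le> F (x_cur \<omega> j t) - F (x_next \<omega> j t) + 3 * \<eta> / 2 * (norm (grad_error \<omega> j t))\<^sup>2
      - 3 * \<eta> / 2 * real m * Q * (norm (x_next \<omega> j t - x_cur \<omega> j t))\<^sup>2"
proof -
  from prox_grad_step_residual_bound[OF full_grad_has_derivative full_grad_lipschitz Lt_pos K_nonneg
      eta_eq x_next_is_prox[OF assms, where \<omega> = \<omega> and j = j]]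
  show ?thesis using Lt_pos by (simp add: residual_def grad_error_def F_def K_def)
qed

lemma dist0_frechet_subdiff_le_residual:
  assumes "t \<ge> 1"
  shows "dist0 (frechet_subdiff F (x_next \<omega> j t)) \<le> ennreal (residual \<omega> j t)"
proof -
  have "full_grad n g (x_next \<omega> j t)
      - (1 / \<eta>) *\<^sub>R (x_next \<omega> j t - (x_cur \<omega> j t - \<eta> *\<^sub>R estimator \<omega> j t))
      \<in> frechet_subdiff F (x_next \<omega> j t)"
    unfolding F_def
    by (rule is_prox_residual_in_frechet_subdiff[OF eta_pos full_grad_has_derivative
          x_next_is_prox[OF assms, where \<omega> = \<omega> and j = j]])
  then show ?thesis unfolding dist0_def residual_def by (rule INF_lower)
qed

definition samples :: "nat \<Rightarrow> (nat \<times> nat \<Rightarrow> nat set) pmf" where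
  "samples J = Pi_pmf ({1..J} \<times> {1..m}) {} (\<lambda>_. S)"

abbreviation expect :: "nat \<Rightarrow> ((nat \<times> nat \<Rightarrow> nat set) \<Rightarrow> real) \<Rightarrow> real" where
  "expect J h \<equiv> measure_pmf.expectation (samples J) h"

lemma finite_set_pmf_samples: "finite (set_pmf (samples J))"
  unfolding samples_def using finite_set_pmf_sampling
  by (subst set_Pi_pmf) (auto intro!: finite_PiE_dflt)

lemma integrable_samples [simp]: "integrable (measure_pmf (samples J)) (h :: _ \<Rightarrow> real)"
  by (rule integrable_measure_pmf_finite[OF finite_set_pmf_samples])

lemma grad_error_resample_variance:
  assumes "j \<ge> 1"
  shows "(\<integral>\<^sup>+y. ennreal ((norm (grad_error (fun_upd \<omega> (j, Suc t) y) j (Suc t)))\<^sup>2) \<partial>measure_pmf S)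
    \<le> ennreal ((norm (grad_error \<omega> j t))\<^sup>2 + Q * (norm (x_next \<omega> j t - x_cur \<omega> j t))\<^sup>2)"
proof -
  have "(\<integral>\<^sup>+y. ennreal ((norm (grad_error (fun_upd \<omega> (j, Suc t) y) j (Suc t)))\<^sup>2) \<partial>measure_pmf S)
    = ennreal (measure_pmf.expectation S
        (\<lambda>y. (norm (grad_error (fun_upd \<omega> (j, Suc t) y) j (Suc t)))\<^sup>2))"
    by (simp add: nn_integral_eq_integral)
  also have "\<dots> \<le> ennreal ((norm (grad_error \<omega> j t))\<^sup>2 + Q * (norm (x_next \<omega> j t - x_cur \<omega> j t))\<^sup>2)"
    using assms by (intro ennreal_leI) (simp add: grad_error_fun_upd full_grad_variance)
  finally show ?thesis .
qed

lemma grad_error_variance: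
  assumes j: "j \<in> {1..J}" and t: "t \<in> {1..<m}"
  shows "expect J (\<lambda>\<omega>. (norm (grad_error \<omega> j (Suc t)))\<^sup>2)
    \<le> expect J (\<lambda>\<omega>. (norm (grad_error \<omega> j t))\<^sup>2 + Q * (norm (x_next \<omega> j t - x_cur \<omega> j t))\<^sup>2)"
proof -
  have k: "(j, Suc t) \<in> {1..J} \<times> {1..m}" using j t by auto
  have "ennreal (expect J (\<lambda>\<omega>. (norm (grad_error \<omega> j (Suc t)))\<^sup>2))
      = (\<integral>\<^sup>+\<omega>. ennreal ((norm (grad_error \<omega> j (Suc t)))\<^sup>2) \<partial>measure_pmf (samples J))"
    by (simp add: nn_integral_eq_integral)
  also have "\<dots> = (\<integral>\<^sup>+\<omega>. \<integral>\<^sup>+y. ennreal ((norm (grad_error (fun_upd \<omega> (j, Suc t) y) j (Suc t)))\<^sup>2)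
      \<partial>measure_pmf S \<partial>measure_pmf (samples J))"
    unfolding samples_def by (rule nn_integral_Pi_pmf_resample[OF _ k]) simp
  also have "\<dots> \<le> (\<integral>\<^sup>+\<omega>. ennreal ((norm (grad_error \<omega> j t))\<^sup>2
      + Q * (norm (x_next \<omega> j t - x_cur \<omega> j t))\<^sup>2) \<partial>measure_pmf (samples J))"
    using j by (intro nn_integral_mono grad_error_resample_variance) simp
  also have "\<dots> = ennreal (expect J (\<lambda>\<omega>. (norm (grad_error \<omega> j t))\<^sup>2
      + Q * (norm (x_next \<omega> j t - x_cur \<omega> j t))\<^sup>2))"
    by (rule nn_integral_eq_integral) (use Q_nonneg in auto)
  finally have "ennreal (expect J (\<lambda>\<omega>. (norm (grad_error \<omega> j (Suc t)))\<^sup>2))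
      \<le> ennreal (expect J (\<lambda>\<omega>. (norm (grad_error \<omega> j t))\<^sup>2
        + Q * (norm (x_next \<omega> j t - x_cur \<omega> j t))\<^sup>2))" .
  moreover have "0 \<le> expect J (\<lambda>\<omega>. (norm (grad_error \<omega> j t))\<^sup>2
      + Q * (norm (x_next \<omega> j t - x_cur \<omega> j t))\<^sup>2)"
    using Q_nonneg by (intro Bochner_Integration.integral_nonneg) auto
  ultimately show ?thesis by (simp only: ennreal_le_iff)
qed

lemma lyapunov_one_step:
  assumes t: "t \<in> {1..m}"
  shows "F (x_next \<omega> j t) - F xstar + 3 * \<eta> / 2 * real (m - t)
      * ((norm (grad_error \<omega> j t))\<^sup>2 + Q * (norm (x_next \<omega> j t - x_cur \<omega> j t))\<^sup>2)
      + 1 / (24 * Lt + 4 * K) * (residual \<omega> j t)\<^sup>2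
    \<le> lyapunov \<omega> j t"
proof -
  define c where "c = 3 * \<eta> / 2 * real (m - t)"
  define e2 where "e2 = (norm (grad_error \<omega> j t))\<^sup>2"
  define d2 where "d2 = (norm (x_next \<omega> j t - x_cur \<omega> j t))\<^sup>2"
  have one_step: "1 / (24 * Lt + 4 * K) * (residual \<omega> j t)\<^sup>2
      \<le> F (x_cur \<omega> j t) - F (x_next \<omega> j t) + 3 * \<eta> / 2 * e2 - 3 * \<eta> / 2 * real m * Q * d2"
    using residual_step_bound[of t \<omega> j] t by (simp add: e2_def d2_def)
  \<comment> \<open>The variance added to the error term is paid for by the last term of the one-step bound.\<close>
  have "c \<le> 3 * \<eta> / 2 * real m" using eta_pos by (simp add: c_def)
  then have variance_paid: "c * (Q * d2) \<le> 3 * \<eta> / 2 * real m * Q * d2"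
    using mult_right_mono[of c "3 * \<eta> / 2 * real m" "Q * d2"] Q_nonneg
    by (simp add: d2_def mult.assoc)
  have "real (m + 1 - t) = real (m - t) + 1" using t by simp
  then have "lyapunov \<omega> j t = F (x_cur \<omega> j t) - F xstar + 3 * \<eta> / 2 * (real (m - t) + 1) * e2"
    by (simp only: lyapunov_def e2_def)
  also have "\<dots> = F (x_cur \<omega> j t) - F xstar + c * e2 + 3 * \<eta> / 2 * e2"
    by (simp add: c_def algebra_simps)
  finally have lyapunov_eq: "lyapunov \<omega> j t = F (x_cur \<omega> j t) - F xstar + c * e2 + 3 * \<eta> / 2 * e2" .
  show ?thesis
    using one_step variance_paid lyapunov_eq
    unfolding c_def[symmetric] e2_def[symmetric] d2_def[symmetric]
    by (simp add: distrib_left)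
qed

lemma lyapunov_step:
  assumes j: "j \<in> {1..J}" and t: "t \<in> {1..m}"
  shows "expect J (\<lambda>\<omega>. lyapunov \<omega> j (Suc t))
      + 1 / (24 * Lt + 4 * K) * expect J (\<lambda>\<omega>. (residual \<omega> j t)\<^sup>2)
    \<le> expect J (\<lambda>\<omega>. lyapunov \<omega> j t)"
proof -
  define c where "c = 3 * \<eta> / 2 * real (m - t)"
  have c: "c \<ge> 0" using eta_pos by (simp add: c_def)
  define gap where "gap = (\<lambda>\<omega>. F (x_next \<omega> j t) - F xstar)"
  define err where
    "err = (\<lambda>\<omega>. (norm (grad_error \<omega> j t))\<^sup>2 + Q * (norm (x_next \<omega> j t - x_cur \<omega> j t))\<^sup>2)"
  have "expect J (\<lambda>\<omega>. lyapunov \<omega> j (Suc t))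
      = expect J gap + c * expect J (\<lambda>\<omega>. (norm (grad_error \<omega> j (Suc t)))\<^sup>2)"
    by (simp add: lyapunov_def x_cur_Suc c_def gap_def)
  also have "\<dots> \<le> expect J gap + c * expect J err"
  proof (cases "t < m")
    case True
    then show ?thesis
      using grad_error_variance[OF j] t c
      by (intro add_left_mono mult_left_mono) (auto simp: err_def)
  next
    case False
    then show ?thesis using t by (simp add: c_def)
  qed
  finally have "expect J (\<lambda>\<omega>. lyapunov \<omega> j (Suc t))
      + 1 / (24 * Lt + 4 * K) * expect J (\<lambda>\<omega>. (residual \<omega> j t)\<^sup>2)
      \<le> expect J (\<lambda>\<omega>. gap \<omega> + c * err \<omega> + 1 / (24 * Lt + 4 * K) * (residual \<omega> j t)\<^sup>2)"
    by simp
  also have "\<dots> \<le> expect J (\<lambda>\<omega>. lyapunov \<omega> j t)"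
    using lyapunov_one_step[OF t] by (intro integral_mono) (simp_all add: gap_def err_def c_def)
  finally show ?thesis .
qed

lemma epoch_decrease:
  assumes j: "j \<in> {1..J}"
  shows "expect J (\<lambda>\<omega>. F (epoch \<omega> j) - F xstar)
      + 1 / (24 * Lt + 4 * K) * (\<Sum>t=1..m. expect J (\<lambda>\<omega>. (residual \<omega> j t)\<^sup>2))
    \<le> expect J (\<lambda>\<omega>. F (epoch \<omega> (j - 1)) - F xstar)"
proof -
  have j1: "j \<ge> 1" using j by simp
  have "expect J (\<lambda>\<omega>. lyapunov \<omega> j (Suc m))
      + (\<Sum>t=1..m. 1 / (24 * Lt + 4 * K) * expect J (\<lambda>\<omega>. (residual \<omega> j t)\<^sup>2))
      \<le> expect J (\<lambda>\<omega>. lyapunov \<omega> j 1)"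
    by (rule telescope_le) (rule lyapunov_step[OF j])
  then show ?thesis
    unfolding lyapunov_first lyapunov_last[OF j1] sum_distrib_left .
qed

lemma residual_sq_sum_le:
  "(\<Sum>j=1..J. \<Sum>t=1..m. expect J (\<lambda>\<omega>. (residual \<omega> j t)\<^sup>2)) \<le> (24 * Lt + 4 * K) * (F x1 - F xstar)"
proof -
  define a where "a j = expect J (\<lambda>\<omega>. F (epoch \<omega> (j - 1)) - F xstar)" for j
  define b where "b j = 1 / (24 * Lt + 4 * K) * (\<Sum>t=1..m. expect J (\<lambda>\<omega>. (residual \<omega> j t)\<^sup>2))" for j
  have "a (Suc J) + (\<Sum>j=1..J. b j) \<le> a 1"
    by (rule telescope_le) (use epoch_decrease in \<open>simp add: a_def b_def\<close>)
  moreover have "a 1 = F x1 - F xstar"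
    by (simp add: a_def epoch_def)
  moreover have "a (Suc J) \<ge> 0"
    unfolding a_def using minimum by (intro Bochner_Integration.integral_nonneg) simp
  ultimately have "1 / (24 * Lt + 4 * K) * (\<Sum>j=1..J. \<Sum>t=1..m. expect J (\<lambda>\<omega>. (residual \<omega> j t)\<^sup>2))
      \<le> F x1 - F xstar"
    by (simp add: b_def sum_distrib_left)
  then show ?thesis
    using Lt_pos K_nonneg by (simp add: field_simps)
qed

lemma expected_residual_sq_le:
  assumes J: "J \<ge> 1" and m: "m \<ge> 1"
    and budget: "(24 * Lt + 4 * K) * (F x1 - F xstar) \<le> real J * real m * \<epsilon>\<^sup>2"
  shows "(\<integral>\<^sup>+x. ennreal ((residual (fst x) (fst (snd x)) (snd (snd x)))\<^sup>2)
      \<partial>measure_pmf (pair_pmf (samples J) (pmf_of_set ({1..J} \<times> {1..m})))) \<le> ennreal (\<epsilon>\<^sup>2)"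
proof -
  define D where "D = {1..J} \<times> {1..m}"
  have D: "finite D" "D \<noteq> {}" "card D = J * m" using J m by (auto simp: D_def)
  have "(\<Sum>(j, t)\<in>D. expect J (\<lambda>\<omega>. (residual \<omega> j t)\<^sup>2))
      = (\<Sum>j=1..J. \<Sum>t=1..m. expect J (\<lambda>\<omega>. (residual \<omega> j t)\<^sup>2))"
    by (simp add: D_def sum.cartesian_product)
  also have "\<dots> \<le> real (card D) * \<epsilon>\<^sup>2"
    using order_trans[OF residual_sq_sum_le budget] D by simp
  finally have sum_le: "(\<Sum>(j, t)\<in>D. expect J (\<lambda>\<omega>. (residual \<omega> j t)\<^sup>2)) \<le> real (card D) * \<epsilon>\<^sup>2" .
  have "(\<integral>\<^sup>+x. ennreal ((residual (fst x) (fst (snd x)) (snd (snd x)))\<^sup>2)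
        \<partial>measure_pmf (pair_pmf (samples J) (pmf_of_set D)))
      = (\<Sum>d\<in>D. \<integral>\<^sup>+\<omega>. ennreal ((residual \<omega> (fst d) (snd d))\<^sup>2) \<partial>measure_pmf (samples J))
        / of_nat (card D)"
    by (subst nn_integral_pair_pmf_of_set[OF D(1,2)]) simp
  also have "\<dots> = ennreal (\<Sum>(j, t)\<in>D. expect J (\<lambda>\<omega>. (residual \<omega> j t)\<^sup>2)) / ennreal (real (card D))"
    by (simp add: case_prod_beta nn_integral_eq_integral ennreal_of_nat_eq_real_of_nat)
  also have "\<dots> = ennreal ((\<Sum>(j, t)\<in>D. expect J (\<lambda>\<omega>. (residual \<omega> j t)\<^sup>2)) / real (card D))"
    using D J m
    by (intro divide_ennreal) (auto intro!: sum_nonneg Bochner_Integration.integral_nonneg)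
  also have "\<dots> \<le> ennreal (\<epsilon>\<^sup>2)"
    using sum_le D J m by (intro ennreal_leI) (simp add: pos_divide_le_eq mult.commute)
  finally show ?thesis by (simp add: D_def)
qed

lemma expected_dist0_le:
  assumes J: "J \<ge> 1" and m: "m \<ge> 1" and \<epsilon>: "\<epsilon> > 0"
    and budget: "(24 * Lt + 4 * K) * (F x1 - F xstar) \<le> real J * real m * \<epsilon>\<^sup>2"
  shows "(\<integral>\<^sup>+ (\<omega>, (j, t)). dist0 (frechet_subdiff F (proxsarah_iter n g p \<eta> pr m x1 \<omega> j t))
      \<partial>measure_pmf (pair_pmf (samples J) (pmf_of_set ({1..J} \<times> {1..m})))) \<le> ennreal \<epsilon>"
proof -
  have "(\<integral>\<^sup>+ (\<omega>, (j, t)). dist0 (frechet_subdiff F (proxsarah_iter n g p \<eta> pr m x1 \<omega> j t))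
      \<partial>measure_pmf (pair_pmf (samples J) (pmf_of_set ({1..J} \<times> {1..m}))))
    \<le> (\<integral>\<^sup>+x. ennreal (residual (fst x) (fst (snd x)) (snd (snd x)))
      \<partial>measure_pmf (pair_pmf (samples J) (pmf_of_set ({1..J} \<times> {1..m}))))"
    using J m by (intro nn_integral_mono_AE)
      (auto simp: AE_measure_pmf_iff proxsarah_iter_eq dist0_frechet_subdiff_le_residual)
  also have "\<dots> \<le> ennreal \<epsilon>"
    by (rule nn_integral_le_of_nn_integral_square_le[OF \<epsilon> expected_residual_sq_le[OF J m budget]])
  finally show ?thesis .
qed

end

theorem theorem5p5:
  fixes n m J :: nat
    and f :: "nat \<Rightarrow> 'a::euclidean_space \<Rightarrow> real"
    and g :: "nat \<Rightarrow> 'a \<Rightarrow> 'a"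
    and G L v :: "nat \<Rightarrow> real"
    and r :: "'a \<Rightarrow> real"
    and S :: "nat set pmf"
    and pr :: "'a \<Rightarrow> 'a"
    and xstar x1 :: 'a
    and \<epsilon> :: real
    and F :: "'a \<Rightarrow> real" and p :: "nat \<Rightarrow> real" and P :: "nat \<Rightarrow> nat \<Rightarrow> real"
    and b Lt Q \<eta> \<Delta> :: real
  assumes F_def: "F = (\<lambda>x. (1 / real n) * (\<Sum>i<n. f i x) + r x)"
    and p_def: "p = (\<lambda>i. measure_pmf.prob S {A. i \<in> A})"
    and P_def: "P = (\<lambda>i j. measure_pmf.prob S {A. i \<in> A \<and> j \<in> A})"
    and b_def: "b = measure_pmf.expectation S (\<lambda>A. real (card A))"
    and Lt_def: "Lt = (1 / real n) * (\<Sum>i<n. L i)"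
    and Q_def: "Q = (\<Sum>i<n. v i * (L i)\<^sup>2 / (p i * (real n)\<^sup>2))"
    and eta_def: "\<eta> = 1 / (4 * Lt + 2 * real m * Q / Lt)"
    and Delta_def: "\<Delta> = F x1 - F xstar"
    and n_pos: "n \<ge> 1"
    and grad: "\<And>i x. i < n \<Longrightarrow> GDERIV (f i) x :> g i x"
    and grad_bdd: "\<And>i x. i < n \<Longrightarrow> norm (g i x) \<le> G i"
    and grad_lip: "\<And>i x y. i < n \<Longrightarrow> norm (g i x - g i y) \<le> L i * norm (x - y)"
    and Lt_pos: "Lt > 0"
    and minimum: "\<And>x. F xstar \<le> F x"
    and prox_exists: "\<And>y. \<exists>x. is_prox \<eta> r y x"
    and prox_sel: "\<And>y. is_prox \<eta> r y (pr y)"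
    and sampling_subset: "set_pmf S \<subseteq> Pow {..<n}"
    and proper: "\<And>i. i < n \<Longrightarrow> p i > 0"
    and ESO: "\<And>h :: nat \<Rightarrow> real.
       (\<Sum>i<n. \<Sum>j<n. (P i j - p i * p j) * h i * h j) \<le> (\<Sum>i<n. p i * v i * (h i)\<^sup>2)"
    and m_pos: "m \<ge> 1"
    and eps_pos: "\<epsilon> > 0"
    and J_pos: "J \<ge> 1"
    and J_def: "real J = 1 / (real m * \<epsilon>\<^sup>2) * (24 * Lt + 4 * real m * Q / Lt) * \<Delta>"
  shows "(\<integral>\<^sup>+ (\<omega>, (j, t)). dist0 (frechet_subdiff F (proxsarah_iter n g p \<eta> pr m x1 \<omega> j t))
            \<partial>measure_pmf (pair_pmf (Pi_pmf ({1..J} \<times> {1..m}) {} (\<lambda>_. S))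
                                    (pmf_of_set ({1..J} \<times> {1..m}))))
         \<le> ennreal \<epsilon>
       \<and> ifo_total n m b J
           = (real n + real m * b) / (real m * \<epsilon>\<^sup>2) * (24 * Lt + 4 * real m * Q / Lt) * \<Delta>"
proof -
  interpret proxsarah_as n S p P v m f g L r pr xstar x1 F Lt Q \<eta>
    by unfold_locales (fact assms)+
  have epochs: "real J * real m * \<epsilon>\<^sup>2 = (24 * Lt + 4 * K) * \<Delta>"
    using J_def m_pos eps_pos by (simp add: K_def field_simps)
  have "ifo_total n m b J = real J * real m * \<epsilon>\<^sup>2 * ((real n + real m * b) / (real m * \<epsilon>\<^sup>2))"
    using m_pos eps_pos by (simp add: ifo_total_def field_simps)
  then have ifo: "ifo_total n m b J
      = (real n + real m * b) / (real m * \<epsilon>\<^sup>2) * (24 * Lt + 4 * real m * Q / Lt) * \<Delta>"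
    unfolding epochs by (simp add: K_def algebra_simps)
  have "(24 * Lt + 4 * K) * (F x1 - F xstar) \<le> real J * real m * \<epsilon>\<^sup>2"
    by (simp add: epochs Delta_def)
  from expected_dist0_le[OF J_pos m_pos eps_pos this] ifo show ?thesis
    by (simp add: samples_def)
qed

end
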